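(* For every integer $1\le m\le D-2$, the Markov chain on $\Sigma_m$ induced by the local automaton gate set $\mathcal G$ is irreducible: for any $S,S'\in\Sigma_m$ there is a finite sequence $u_1,\dots,u_\ell\in\mathcal G$ with $u_\ell\circ\cdots\circ u_1(S)=S'$.
   Context: Consider $N\ge3$ qubits on a ring (site indices modulo $N$), bitstrings $\mathbf z\in\{0,1\}^N$, $D=2^N$. The gate set is $\mathcal G=\{u_{iab}: i\in\{1,\dots,N\},\ a,b\in\{0,1\}\}$, where $u_{iab}$ is the permutation of $\{0,1\}^N$ that flips bit $i$ if and only if bit $i-1$ equals $a$ and bit $i+1$ equals $b$. $\Sigma_m$ is the set of subsets of $\{0,1\}^N$ of cardinality $m$, with $u(S)=\{u(\mathbf z):\mathbf z\in S\}$. The induced Markov chain has transition matrix $\Gamma_{S,S'}=\frac{1}{|\mathcal G|}\sum_{u\in\mathcal G}\delta_{S',u(S)}$. *)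

theory Defs
  imports Main
begin

text \<open>Bitstrings on a ring of N qubits are boolean lists of length N; sites are
  indexed 0..N-1 (0-based), neighbours taken modulo N.\<close>

definition bitstrings :: "nat \<Rightarrow> bool list set" where
  "bitstrings N = {z. length z = N}"

definition gate :: "nat \<Rightarrow> nat \<Rightarrow> bool \<Rightarrow> bool \<Rightarrow> bool list \<Rightarrow> bool list" where
  "gate N i a b z =
     (if z ! ((i + N - 1) mod N) = a \<and> z ! ((i + 1) mod N) = b
      then z[i := \<not> z ! i] else z)"

definition gate_set :: "nat \<Rightarrow> (nat \<times> bool \<times> bool) set" where
  "gate_set N = {(i, a, b). i < N}"

text \<open>Apply the gate sequence [u_1,...,u_l] in order: u_l o ... o u_1.\<close>
definition apply_gates :: "nat \<Rightarrow> (nat \<times> bool \<times> bool) list \<Rightarrow> bool list \<Rightarrow> bool list" where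
  "apply_gates N gs z = fold (\<lambda>(i, a, b) w. gate N i a b w) gs z"

definition Sigma_m :: "nat \<Rightarrow> nat \<Rightarrow> bool list set set" where
  "Sigma_m N m = {S. S \<subseteq> bitstrings N \<and> card S = m}"

end

theory Submission
  imports Defs
begin

(* The group commutator of
   controlled flips on distinct targets i and j, the first one also controlled by bit j,
   is the flip of i under the conjunction of the remaining controls; starting from the
   gates, this yields the flip of any bit i controlled by any pattern on a pair of other
   bits, or on any nonempty set of at most N - 2 other bits. The commutator of two such
   flips on targets i and j whose controls together fix every other bit of a bitstring x
   is the 3-cycle x -> x + e_i -> x + e_j -> x. These 3-cycles replace an element of S by
   a Hamming neighbour outside S and fix the rest of S; walking along Hamming paths then
   turns S into any S' of the same size. *)

definition realizable :: "nat \<Rightarrow> (bool list \<Rightarrow> bool list) \<Rightarrow> bool" where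
  "realizable N f \<longleftrightarrow>
     (\<exists>gs. set gs \<subseteq> gate_set N \<and> (\<forall>z. length z = N \<longrightarrow> apply_gates N gs z = f z))"

definition matches :: "nat set \<Rightarrow> (nat \<Rightarrow> bool) \<Rightarrow> bool list \<Rightarrow> bool" where
  "matches P w z \<longleftrightarrow> (\<forall>p\<in>P. z ! p = w p)"

definition cflip :: "nat \<Rightarrow> (bool list \<Rightarrow> bool) \<Rightarrow> bool list \<Rightarrow> bool list" where
  "cflip i c z = (if c z then z[i := \<not> z ! i] else z)"

definition toffoli_realizable :: "nat \<Rightarrow> nat \<Rightarrow> nat set \<Rightarrow> bool" where
  "toffoli_realizable N i P \<longleftrightarrow> (\<forall>w. realizable N (cflip i (matches P w)))"

lemma apply_gates_append:
  "apply_gates N (gs @ hs) z = apply_gates N hs (apply_gates N gs z)"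
  by (simp add: apply_gates_def)

lemma length_gate [simp]: "length (gate N i a b z) = length z"
  by (simp add: gate_def)

lemma length_apply_gates [simp]: "length (apply_gates N gs z) = length z"
  by (induction gs arbitrary: z) (auto simp: apply_gates_def)

lemma realizable_comp:
  assumes "realizable N f" and "realizable N g"
  shows "realizable N (g \<circ> f)"
proof -
  obtain gs where gs: "set gs \<subseteq> gate_set N" "\<And>z. length z = N \<Longrightarrow> apply_gates N gs z = f z"
    using assms(1) unfolding realizable_def by blast
  obtain hs where hs: "set hs \<subseteq> gate_set N" "\<And>z. length z = N \<Longrightarrow> apply_gates N hs z = g z"
    using assms(2) unfolding realizable_def by blast
  have "apply_gates N (gs @ hs) z = g (f z)" if "length z = N" for z
  proof -
    have "length (f z) = N" using that gs(2)[OF that, symmetric] by simp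
    then show ?thesis using gs(2)[OF that] hs(2) by (simp add: apply_gates_append)
  qed
  then show ?thesis
    unfolding realizable_def using gs(1) hs(1) by (intro exI[of _ "gs @ hs"]) auto
qed

lemma realizable_cong:
  "realizable N f \<Longrightarrow> (\<And>z. length z = N \<Longrightarrow> f z = g z) \<Longrightarrow> realizable N g"
  unfolding realizable_def by metis

lemma realizable_gate: "i < N \<Longrightarrow> realizable N (gate N i a b)"
  unfolding realizable_def
  by (intro exI[of _ "[(i, a, b)]"]) (auto simp: gate_set_def apply_gates_def)

lemma matches_update [simp]: "i \<notin> P \<Longrightarrow> matches P w (z[i := b]) = matches P w z"
  unfolding matches_def by (metis nth_list_update_neq)

lemma matches_insert [simp]: "matches (insert j P) w z \<longleftrightarrow> z ! j = w j \<and> matches P w z"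
  unfolding matches_def by auto

lemma matches_Un [simp]: "matches (P \<union> Q) w z \<longleftrightarrow> matches P w z \<and> matches Q w z"
  unfolding matches_def by auto

lemma matches_empty [simp]: "matches {} w z"
  unfolding matches_def by simp

lemma cflip_cflip_xor:
  assumes "i < length z" and "\<And>u b. c (u[i := b]) = c u"
  shows "cflip i c (cflip i d z) = cflip i (\<lambda>u. c u \<noteq> d u) z"
  using assms unfolding cflip_def by auto

lemma cflip_involution:
  assumes "\<And>u b. c (u[i := b]) = c u"
  shows "cflip i c (cflip i c z) = z"
  using assms unfolding cflip_def by (cases "i < length z") (auto simp: list_update_beyond)

lemma cflip_invariant:
  assumes "\<And>u b. c (u[i := b]) = c u"
  shows "c (cflip i d z) = c z"
  using assms unfolding cflip_def by simp

lemma cflip_commutator: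
  fixes v :: bool
  assumes "i \<noteq> j" "i < length z" "j < length z"
    and ci: "\<And>u b. c (u[i := b]) = c u" and cj: "\<And>u b. c (u[j := b]) = c u"
    and di: "\<And>u b. d (u[i := b]) = d u" and dj: "\<And>u b. d (u[j := b]) = d u"
  defines "X \<equiv> cflip i (\<lambda>u. u ! j = v \<and> c u)" and "Y \<equiv> cflip j d"
  shows "X (Y (X (Y z))) = cflip i (\<lambda>u. c u \<and> d u) z"
proof (cases "c z \<and> d z")
  case True
  have "X (Y (X (Y z))) = z[i := \<not> z ! i]"
  proof (cases "z ! j = v")
    case True
    then have "v = z ! j" by simp
    then show ?thesis using \<open>c z \<and> d z\<close> assms(1-3) ci cj di dj
      unfolding X_def Y_def cflip_def by (simp add: list_update_swap)
  next
    case False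
    then have "v = (\<not> z ! j)" by simp
    then show ?thesis using \<open>c z \<and> d z\<close> assms(1-3) ci cj di dj
      unfolding X_def Y_def cflip_def by (simp add: list_update_swap)
  qed
  then show ?thesis using True unfolding cflip_def by simp
next
  case False
  then consider "\<not> c z" | "\<not> d z" by blast
  then show ?thesis
  proof cases
    case 1
    have "X u = u" if "\<not> c u" for u
      using that unfolding X_def cflip_def by simp
    moreover have "Y (Y u) = u" "c (Y u) = c u" for u
      unfolding Y_def using dj cj by (auto intro!: cflip_involution cflip_invariant)
    ultimately show ?thesis using 1 unfolding cflip_def by simp
  next
    case 2
    have "Y u = u" if "\<not> d u" for u
      using that unfolding Y_def cflip_def by simp
    moreover have "X (X u) = u" "d (X u) = d u" for u
      unfolding X_def using assms(1) ci di by (auto intro!: cflip_involution cflip_invariant)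
    ultimately show ?thesis using 2 unfolding cflip_def by simp
  qed
qed

lemma add_mod_neq:
  fixes i N d :: nat
  assumes "i < N" "0 < d" "d < N"
  shows "(i + d) mod N \<noteq> i"
proof (cases "i + d < N")
  case False
  then have "(i + d) mod N = i + d - N" using assms by (simp add: mod_if)
  then show ?thesis using False assms by linarith
qed (use assms in simp)

lemma ring_neighbours:
  fixes i N :: nat
  assumes "3 \<le> N" "i < N"
  shows "(i + N - 1) mod N \<noteq> i" "(i + 1) mod N \<noteq> i" "(i + N - 1) mod N \<noteq> (i + 1) mod N"
proof -
  show "(i + N - 1) mod N \<noteq> i"
    using add_mod_neq[of i N "N - 1"] assms by simp
  show "(i + 1) mod N \<noteq> i"
    using add_mod_neq[of i N 1] assms by simp
  have "((i + 1) mod N + (N - 2)) mod N = (i + 1 + (N - 2)) mod N"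
    by (rule mod_add_left_eq)
  moreover have "i + 1 + (N - 2) = i + N - 1"
    using assms by simp
  ultimately have "(i + N - 1) mod N = ((i + 1) mod N + (N - 2)) mod N"
    by metis
  then show "(i + N - 1) mod N \<noteq> (i + 1) mod N"
    using add_mod_neq[of "(i + 1) mod N" N "N - 2"] assms by simp
qed

lemma toffoli_commutator:
  assumes "toffoli_realizable N i (insert j P)" and "toffoli_realizable N j Q"
    and "i \<noteq> j" "i < N" "j < N" "i \<notin> P" "j \<notin> P" "i \<notin> Q" "j \<notin> Q"
  shows "toffoli_realizable N i (P \<union> Q)"
  unfolding toffoli_realizable_def
proof
  fix w
  let ?X = "cflip i (matches (insert j P) w)" and ?Y = "cflip j (matches Q w)"
  have "realizable N (?X \<circ> ?Y \<circ> ?X \<circ> ?Y)"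
    using assms(1,2) unfolding toffoli_realizable_def by (blast intro: realizable_comp)
  moreover have "(?X \<circ> ?Y \<circ> ?X \<circ> ?Y) z = cflip i (matches (P \<union> Q) w) z" if "length z = N" for z
  proof -
    have "matches (insert j P) w = (\<lambda>u. u ! j = w j \<and> matches P w u)"
      by auto
    moreover have "matches (P \<union> Q) w = (\<lambda>u. matches P w u \<and> matches Q w u)"
      by auto
    ultimately show ?thesis
      using cflip_commutator[where v = "w j" and c = "matches P w" and d = "matches Q w"] assms that by simp
  qed
  ultimately show "realizable N (cflip i (matches (P \<union> Q) w))"
    by (rule realizable_cong)
qed

lemma toffoli_gate:
  assumes "i < N"
  shows "toffoli_realizable N i {(i + N - 1) mod N, (i + 1) mod N}"
  unfolding toffoli_realizable_def
proof
  fix w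
  show "realizable N (cflip i (matches {(i + N - 1) mod N, (i + 1) mod N} w))"
    using realizable_gate[OF assms, of "w ((i + N - 1) mod N)" "w ((i + 1) mod N)"]
    by (rule realizable_cong) (auto simp: gate_def cflip_def)
qed

(* The two gates demanding opposite values of the left neighbour compose to a flip that
   ignores the left neighbour. *)
lemma toffoli_succ:
  assumes "3 \<le> N" "i < N"
  shows "toffoli_realizable N i {(i + 1) mod N}"
  unfolding toffoli_realizable_def
proof
  fix w
  define l where "l = (i + N - 1) mod N"
  define r where "r = (i + 1) mod N"
  have lr: "l \<noteq> i" "r \<noteq> i" "l \<noteq> r"
    using ring_neighbours[OF assms] unfolding l_def r_def by auto
  let ?X = "cflip i (matches {l, r} w)" and ?Y = "cflip i (matches {l, r} (w(l := \<not> w l)))"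
  have "realizable N (?X \<circ> ?Y)"
    using toffoli_gate[OF assms(2)] unfolding toffoli_realizable_def l_def r_def
    by (blast intro: realizable_comp)
  moreover have "(?X \<circ> ?Y) z = cflip i (matches {r} w) z" if "length z = N" for z
  proof -
    have "(?X \<circ> ?Y) z = cflip i (\<lambda>u. matches {l, r} w u \<noteq> matches {l, r} (w(l := \<not> w l)) u) z"
      using cflip_cflip_xor that assms lr by simp
    also have "\<dots> = cflip i (matches {r} w) z"
      using lr by (auto simp: cflip_def)
    finally show ?thesis .
  qed
  ultimately show "realizable N (cflip i (matches {(i + 1) mod N} w))"
    unfolding r_def by (rule realizable_cong)
qed

lemma toffoli_offset:
  assumes "3 \<le> N" "i < N" "0 < d" "d < N"
  shows "toffoli_realizable N i {(i + d) mod N}"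
  using assms(3,4)
proof (induction d rule: nat_induct_non_zero)
  case 1
  then show ?case using toffoli_succ[OF assms(1,2)] by simp
next
  case (Suc d)
  define j where "j = (i + d) mod N"
  have "j < N" "i \<noteq> j"
    using add_mod_neq[of i N d] assms Suc unfolding j_def by auto
  have succ_j: "(j + 1) mod N = (i + Suc d) mod N"
    unfolding j_def by (simp add: mod_Suc_eq)
  have "toffoli_realizable N i ({} \<union> {(j + 1) mod N})"
  proof (rule toffoli_commutator)
    show "toffoli_realizable N i (insert j {})"
      using Suc unfolding j_def by simp
    show "toffoli_realizable N j {(j + 1) mod N}"
      using toffoli_succ[OF assms(1) \<open>j < N\<close>] .
    show "i \<notin> {(j + 1) mod N}"
      unfolding succ_j using add_mod_neq[of i N "Suc d"] assms Suc by auto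
    show "j \<notin> {(j + 1) mod N}"
      using add_mod_neq[of j N 1] assms \<open>j < N\<close> by auto
  qed (use assms \<open>j < N\<close> \<open>i \<noteq> j\<close> in auto)
  then show ?case
    using succ_j by simp
qed

lemma toffoli_single:
  assumes "3 \<le> N" "i < N" "q < N" "q \<noteq> i"
  shows "toffoli_realizable N i {q}"
proof -
  define d where "d = (if i < q then q - i else q + N - i)"
  have "(i + d) mod N = q" "0 < d" "d < N"
    using assms unfolding d_def by auto
  then show ?thesis
    using toffoli_offset[OF assms(1,2), of d] by simp
qed

lemma toffoli_pair:
  assumes "3 \<le> N" "i < N" "p < N" "q < N" "p \<noteq> i" "q \<noteq> i"
  shows "toffoli_realizable N i {p, q}"
proof -
  define l where "l = (i + N - 1) mod N"
  define r where "r = (i + 1) mod N"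
  have lr: "l \<noteq> i" "r \<noteq> i" "l \<noteq> r" "l < N" "r < N"
    using ring_neighbours[OF assms(1,2)] assms(1) unfolding l_def r_def by auto
  have gate: "toffoli_realizable N i (insert r {l})"
    using toffoli_gate[OF assms(2)] unfolding l_def r_def by (simp add: insert_commute)
  have left: "toffoli_realizable N i (insert l {s})" if "s < N" "s \<noteq> i" for s
  proof (cases "s = r")
    case True
    then show ?thesis using gate by (simp add: insert_commute)
  next
    case False
    have "toffoli_realizable N i ({l} \<union> {s})"
      using toffoli_commutator[OF gate toffoli_single[OF assms(1) lr(5) that(1) False]]
        lr that assms False by auto
    then show ?thesis by (simp add: insert_commute)
  qed
  consider "p = l" | "q = l" | "p \<noteq> l" "q \<noteq> l" by blast
  then show ?thesis
  proof cases
    case 1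
    then show ?thesis using left[OF assms(4,6)] by simp
  next
    case 2
    then show ?thesis using left[OF assms(3,5)] by (simp add: insert_commute)
  next
    case 3
    have "toffoli_realizable N i ({q} \<union> {p})"
      using toffoli_commutator[OF left[OF assms(4,6)] toffoli_single[OF assms(1) lr(4) assms(3) 3(1)]]
        lr 3 assms by auto
    then show ?thesis by (simp add: insert_commute)
  qed
qed

(* The controls {p} \<union> B are split through an auxiliary bit j outside P \<union> {i}, the
   commutator of the flip of i controlled by {j, p} and the flip of j controlled by B;
   hence the bound on card P. *)
lemma toffoli_card:
  assumes "3 \<le> N" "i < N" "P \<subseteq> {..<N}" "i \<notin> P" "P \<noteq> {}" "card P + 2 \<le> N"
  shows "toffoli_realizable N i P"
proof -
  have "finite P" using assms(3) finite_subset by blast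
  then show ?thesis
    using assms(2-)
  proof (induction P arbitrary: i rule: finite_induct)
    case empty
    then show ?case by simp
  next
    case (insert p B)
    show ?case
    proof (cases "B = {}")
      case True
      then show ?thesis using toffoli_single[OF assms(1)] insert.prems by auto
    next
      case False
      have "\<not> {..<N} \<subseteq> insert i (insert p B)"
      proof
        assume "{..<N} \<subseteq> insert i (insert p B)"
        then have "card {..<N} \<le> card (insert i (insert p B))"
          using insert.hyps(1) by (intro card_mono) auto
        then show False using insert.prems insert.hyps by (simp add: card_insert_if split: if_splits)
      qed
      then obtain j where "j < N" "j \<notin> insert i (insert p B)" by auto
      have X: "toffoli_realizable N i (insert j {p})"
        using toffoli_pair[OF assms(1) insert.prems(1) \<open>j < N\<close>, of p] insert.prems \<open>j \<notin> _\<close>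
        by (auto simp: insert_commute)
      have Y: "toffoli_realizable N j B"
        using insert.IH[OF \<open>j < N\<close>] insert.prems insert.hyps False \<open>j \<notin> _\<close> by auto
      have "toffoli_realizable N i ({p} \<union> B)"
        using toffoli_commutator[OF X Y] insert.prems insert.hyps \<open>j < N\<close> \<open>j \<notin> _\<close> by auto
      then show ?thesis by simp
    qed
  qed
qed

definition cycle3 :: "'a \<Rightarrow> 'a \<Rightarrow> 'a \<Rightarrow> 'a \<Rightarrow> 'a" where
  "cycle3 x y z v = (if v = x then y else if v = y then z else if v = z then x else v)"

(* On the square of bitstrings x[i := a, j := b], A and B are the transpositions of x with
   x[i := \<not> x ! i] and with x[j := \<not> x ! j]; their commutator is a 3-cycle. *)
lemma commutator_cycle3_square:
  fixes x :: "bool list"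
  assumes "i \<noteq> j" "i < length x" "j < length x"
    and c: "\<And>a b. c (x[i := a, j := b])" and d: "\<And>a b. d (x[i := a, j := b])"
  defines "A \<equiv> cflip i (\<lambda>u. u ! j = x ! j \<and> c u)" and "B \<equiv> cflip j (\<lambda>u. u ! i = x ! i \<and> d u)"
  shows "A (B (A (B (x[i := a, j := b])))) = cycle3 x (x[i := \<not> x ! i]) (x[j := \<not> x ! j]) (x[i := a, j := b])"
proof -
  define U where "U a b = x[i := a, j := b]" for a b
  have U_nth: "U a b ! i = a" "U a b ! j = b" for a b
    unfolding U_def using assms(1-3) by auto
  have U_upd: "(U a b)[i := a'] = U a' b" "(U a b)[j := b'] = U a b'" for a b a' b'
    unfolding U_def using assms(1) by (auto simp: list_update_swap)
  have U_eq: "U a b = U a' b' \<longleftrightarrow> a = a' \<and> b = b'" for a b a' b'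
  proof
    assume "U a b = U a' b'"
    then show "a = a' \<and> b = b'" by (metis U_nth)
  qed simp
  have corners: "U (x ! i) (x ! j) = x" "U (\<not> x ! i) (x ! j) = x[i := \<not> x ! i]"
      "U (x ! i) (\<not> x ! j) = x[j := \<not> x ! j]"
    unfolding U_def using assms(1) by (auto simp: list_update_swap)
  have A: "A (U a b) = (if b = x ! j then U (\<not> a) b else U a b)" for a b
    using c unfolding A_def cflip_def U_def[symmetric] by (simp add: U_nth U_upd)
  have B: "B (U a b) = (if a = x ! i then U a (\<not> b) else U a b)" for a b
    using d unfolding B_def cflip_def U_def[symmetric] by (simp add: U_nth U_upd)
  have "A (B (A (B (U a b)))) = cycle3 (U (x ! i) (x ! j)) (U (\<not> x ! i) (x ! j)) (U (x ! i) (\<not> x ! j)) (U a b)"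
    by (cases a; cases b; cases "x ! i"; cases "x ! j") (simp_all add: A B cycle3_def U_eq)
  then show ?thesis
    unfolding corners by (simp only: U_def)
qed

lemma commutator_cycle3:
  fixes x :: "bool list"
  assumes "i \<noteq> j" "i < length x" "j < length x"
    and ci: "\<And>u b. c (u[i := b]) = c u" and cj: "\<And>u b. c (u[j := b]) = c u"
    and di: "\<And>u b. d (u[i := b]) = d u" and dj: "\<And>u b. d (u[j := b]) = d u"
    and "c x" "d x"
    and determined: "\<And>u. length u = length x \<Longrightarrow> c u \<Longrightarrow> d u \<Longrightarrow> u = x[i := u ! i, j := u ! j]"
    and "length v = length x"
  defines "A \<equiv> cflip i (\<lambda>u. u ! j = x ! j \<and> c u)" and "B \<equiv> cflip j (\<lambda>u. u ! i = x ! i \<and> d u)"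
  shows "A (B (A (B v))) = cycle3 x (x[i := \<not> x ! i]) (x[j := \<not> x ! j]) v"
proof (cases "c v \<and> d v")
  case True
  have square: "c (x[i := a, j := b])" "d (x[i := a, j := b])" for a b
    using \<open>c x\<close> \<open>d x\<close> ci cj di dj by simp_all
  have "A (B (A (B (x[i := v ! i, j := v ! j]))))
      = cycle3 x (x[i := \<not> x ! i]) (x[j := \<not> x ! j]) (x[i := v ! i, j := v ! j])"
    unfolding A_def B_def by (rule commutator_cycle3_square[where c = c and d = d, OF assms(1-3) square])
  moreover have "x[i := v ! i, j := v ! j] = v"
    using determined[OF \<open>length v = length x\<close>] True by simp
  ultimately show ?thesis by simp
next
  case False
  have "cycle3 x (x[i := \<not> x ! i]) (x[j := \<not> x ! j]) v = v"
    using False \<open>c x\<close> \<open>d x\<close> ci cj di dj unfolding cycle3_def by auto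
  moreover have "A (B (A (B v))) = v"
  proof (cases "c v")
    case False
    have "A u = u" if "\<not> c u" for u
      using that unfolding A_def cflip_def by simp
    moreover have "B (B u) = u" and "c (B u) = c u" for u
      unfolding B_def using assms(1) ci cj dj by (auto intro!: cflip_involution cflip_invariant)
    ultimately show ?thesis using False by metis
  next
    case True
    with False have "\<not> d v" by simp
    have "B u = u" if "\<not> d u" for u
      using that unfolding B_def cflip_def by simp
    moreover have "A (A u) = u" and "d (A u) = d u" for u
      unfolding A_def using assms(1) ci di dj by (auto intro!: cflip_involution cflip_invariant)
    ultimately show ?thesis using \<open>\<not> d v\<close> by metis
  qed
  ultimately show ?thesis by simp
qed

lemma matches_eq_insert:
  "j \<in> P \<Longrightarrow> matches P w = (\<lambda>u. u ! j = w j \<and> matches (P - {j}) w u)"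
  unfolding matches_def by auto

lemma realizable_cycle3:
  assumes "3 \<le> N" "i < N" "j < N" "i \<noteq> j" "length x = N"
  shows "realizable N (cycle3 x (x[i := \<not> x ! i]) (x[j := \<not> x ! j]))"
proof -
  have "card {i, j} \<le> 2"
    by (simp add: card_insert_if)
  then have "\<not> {..<N} \<subseteq> {i, j}"
    using card_mono[of "{i, j}" "{..<N}"] assms(1) by auto
  then obtain k where "k < N" "k \<noteq> i" "k \<noteq> j" by auto
  define PA where "PA = {..<N} - {i, k}"
  define PB where "PB = {i, k}"
  define w where "w p = x ! p" for p
  have "j \<in> PA" "i \<in> PB"
    using assms \<open>k \<noteq> j\<close> unfolding PA_def PB_def by auto
  have "card PA + 2 \<le> N"
    using \<open>k < N\<close> \<open>k \<noteq> i\<close> assms(2) unfolding PA_def by (simp add: card_Diff_subset)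
  then have "toffoli_realizable N i PA"
    using toffoli_card[OF assms(1,2), of PA] \<open>j \<in> PA\<close> unfolding PA_def by auto
  moreover have "toffoli_realizable N j PB"
    using toffoli_pair assms \<open>k < N\<close> \<open>k \<noteq> j\<close> unfolding PB_def by simp
  ultimately have "realizable N (cflip i (matches PA w) \<circ> cflip j (matches PB w) \<circ>
      cflip i (matches PA w) \<circ> cflip j (matches PB w))"
    unfolding toffoli_realizable_def by (blast intro: realizable_comp)
  then show ?thesis
  proof (rule realizable_cong)
    fix v :: "bool list"
    assume "length v = N"
    define c where "c = matches (PA - {j}) w"
    define d where "d = matches (PB - {i}) w"
    have "matches PA w = (\<lambda>u. u ! j = x ! j \<and> c u)" "matches PB w = (\<lambda>u. u ! i = x ! i \<and> d u)"
      using matches_eq_insert[OF \<open>j \<in> PA\<close>] matches_eq_insert[OF \<open>i \<in> PB\<close>]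
      unfolding c_def d_def w_def by simp_all
    moreover have "u = x[i := u ! i, j := u ! j]" if "length u = length x" "c u" "d u" for u
    proof (rule nth_equalityI)
      fix p assume "p < length u"
      then show "u ! p = x[i := u ! i, j := u ! j] ! p"
        using that assms unfolding PA_def PB_def c_def d_def matches_def w_def
        by (cases "p = i \<or> p = j") (auto simp: nth_list_update)
    qed (use that in simp)
    ultimately show "(cflip i (matches PA w) \<circ> cflip j (matches PB w) \<circ>
        cflip i (matches PA w) \<circ> cflip j (matches PB w)) v =
        cycle3 x (x[i := \<not> x ! i]) (x[j := \<not> x ! j]) v"
      using commutator_cycle3[of i j x c d v] assms \<open>length v = N\<close> \<open>k \<noteq> j\<close>
      unfolding c_def d_def PA_def PB_def by (simp add: matches_def w_def)
  qed
qed

definition reachable :: "nat \<Rightarrow> bool list set \<Rightarrow> bool list set \<Rightarrow> bool" where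
  "reachable N S T \<longleftrightarrow> (\<exists>gs. set gs \<subseteq> gate_set N \<and> apply_gates N gs ` S = T)"

lemma reachable_refl: "reachable N S S"
  unfolding reachable_def by (intro exI[of _ "[]"]) (simp add: apply_gates_def)

lemma reachable_trans: "reachable N S T \<Longrightarrow> reachable N T U \<Longrightarrow> reachable N S U"
  unfolding reachable_def
  by (metis (no_types, lifting) Un_subset_iff apply_gates_append image_cong image_image set_append)

lemma realizable_reachable: "realizable N f \<Longrightarrow> S \<subseteq> bitstrings N \<Longrightarrow> reachable N S (f ` S)"
  unfolding realizable_def reachable_def bitstrings_def by (auto intro!: image_cong)

lemma image_cycle3_out:
  assumes "x \<in> S" "y \<notin> S" "z \<notin> S" "z \<noteq> y"
  shows "cycle3 x y z ` S = insert y (S - {x})"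
  using assms by (auto simp: cycle3_def image_iff)

lemma image_cycle3_in:
  assumes "x \<in> S" "y \<notin> S" "z \<in> S" "z \<noteq> x"
  shows "cycle3 x z y ` S = insert y (S - {x})"
  using assms by (auto simp: cycle3_def image_iff)

lemma reachable_move_flip:
  assumes "3 \<le> N" "S \<subseteq> bitstrings N" "x \<in> S" "y \<notin> S" "i < N" "y = x[i := \<not> x ! i]"
  shows "reachable N S (insert y (S - {x}))"
proof -
  have "length x = N" using assms(2,3) unfolding bitstrings_def by auto
  define j where "j = (i + 1) mod N"
  define z where "z = x[j := \<not> x ! j]"
  have "j < N" "j \<noteq> i"
    using ring_neighbours[OF assms(1,5)] assms(5) unfolding j_def by auto
  have "z ! j \<noteq> x ! j" "y ! j = x ! j"
    unfolding z_def assms(6) using \<open>j < N\<close> \<open>j \<noteq> i\<close> \<open>length x = N\<close> by simp_all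
  then have "z \<noteq> x" "z \<noteq> y"
    by auto
  have "reachable N S (cycle3 x y z ` S)" "reachable N S (cycle3 x z y ` S)"
    using realizable_reachable[OF realizable_cycle3[OF assms(1,5) \<open>j < N\<close> _ \<open>length x = N\<close>] assms(2)]
      realizable_reachable[OF realizable_cycle3[OF assms(1) \<open>j < N\<close> assms(5) _ \<open>length x = N\<close>] assms(2)]
      \<open>j \<noteq> i\<close>
    unfolding z_def assms(6) by auto
  then show ?thesis
    using image_cycle3_out[OF assms(3,4) _ \<open>z \<noteq> y\<close>] image_cycle3_in[OF assms(3,4) _ \<open>z \<noteq> x\<close>]
    by (cases "z \<in> S") simp_all
qed

lemma reachable_move:
  assumes "3 \<le> N"
  shows "S \<subseteq> bitstrings N \<Longrightarrow> x \<in> S \<Longrightarrow> y \<notin> S \<Longrightarrow> length y = N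
    \<Longrightarrow> reachable N S (insert y (S - {x}))"
proof (induction "card {p. p < N \<and> x ! p \<noteq> y ! p}" arbitrary: x S rule: less_induct)
  case less
  have "length x = N" using less.prems unfolding bitstrings_def by auto
  obtain i where "i < N" "x ! i \<noteq> y ! i"
    using less.prems \<open>length x = N\<close> nth_equalityI[of x y] by auto
  define w where "w = x[i := \<not> x ! i]"
  have "w \<noteq> x" "length w = N"
    unfolding w_def using \<open>i < N\<close> \<open>length x = N\<close> by (auto simp: list_update_same_conv)
  have "{p. p < N \<and> w ! p \<noteq> y ! p} = {p. p < N \<and> x ! p \<noteq> y ! p} - {i}"
    unfolding w_def using \<open>i < N\<close> \<open>length x = N\<close> \<open>x ! i \<noteq> y ! i\<close> by (auto simp: nth_list_update)
  then have closer: "card {p. p < N \<and> w ! p \<noteq> y ! p} < card {p. p < N \<and> x ! p \<noteq> y ! p}"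
    using \<open>i < N\<close> \<open>x ! i \<noteq> y ! i\<close> by (simp only:) (rule card_Diff1_less, auto)
  consider "w = y" | "w \<noteq> y" "w \<notin> S" | "w \<noteq> y" "w \<in> S" by blast
  then show ?case
  proof cases
    case 1
    then show ?thesis
      using reachable_move_flip[OF assms less.prems(1-3) \<open>i < N\<close>] w_def by simp
  next
    case 2
    define T where "T = insert w (S - {x})"
    have "reachable N S T"
      unfolding T_def using reachable_move_flip[OF assms less.prems(1,2) 2(2) \<open>i < N\<close> w_def] .
    moreover have "reachable N T (insert y (T - {w}))"
    proof (rule less.hyps[OF closer])
      show "T \<subseteq> bitstrings N" "w \<in> T" "y \<notin> T"
        unfolding T_def using less.prems 2 \<open>length w = N\<close> by (auto simp: bitstrings_def)
    qed (use less.prems in simp)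
    moreover have "insert y (T - {w}) = insert y (S - {x})"
      unfolding T_def using 2 by auto
    ultimately show ?thesis by (metis reachable_trans)
  next
    case 3
    define T where "T = insert y (S - {w})"
    have "reachable N S T"
      unfolding T_def using less.hyps[OF closer less.prems(1) 3(2) less.prems(3,4)] .
    moreover have "reachable N T (insert w (T - {x}))"
      using reachable_move_flip[OF assms _ _ _ \<open>i < N\<close> w_def, of T] less.prems 3 \<open>w \<noteq> x\<close>
      unfolding T_def by (auto simp: bitstrings_def)
    moreover have "insert w (T - {x}) = insert y (S - {x})"
      unfolding T_def using 3 less.prems \<open>w \<noteq> x\<close> by auto
    ultimately show ?thesis by (metis reachable_trans)
  qed
qed

lemma finite_bitstrings: "finite (bitstrings N)"
  using finite_lists_length_eq[of "UNIV :: bool set" N] by (simp add: bitstrings_def)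

lemma reachable_same_card:
  assumes "3 \<le> N" "S \<subseteq> bitstrings N" "S' \<subseteq> bitstrings N" "card S = card S'"
  shows "reachable N S S'"
  using assms(2,4)
proof (induction "card (S - S')" arbitrary: S)
  case 0
  have "finite S" "finite S'"
    using 0 assms(3) finite_bitstrings finite_subset by blast+
  then have "S \<subseteq> S'"
    using 0 by simp
  then have "S = S'"
    using card_subset_eq \<open>finite S'\<close> 0 by metis
  then show ?case by (simp add: reachable_refl)
next
  case (Suc n)
  have "finite S" "finite S'"
    using Suc.prems assms(3) finite_bitstrings finite_subset by blast+
  obtain x where "x \<in> S" "x \<notin> S'"
    using Suc.hyps(2) by (metis Diff_iff card.empty ex_in_conv nat.distinct(1))
  have "\<not> S' \<subseteq> S"
    using card_subset_eq[OF \<open>finite S\<close>] Suc.prems(2) \<open>x \<in> S\<close> \<open>x \<notin> S'\<close> by metis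
  then obtain y where "y \<in> S'" "y \<notin> S" by blast
  define T where "T = insert y (S - {x})"
  have "reachable N S T"
    unfolding T_def using reachable_move[OF assms(1) Suc.prems(1) \<open>x \<in> S\<close> \<open>y \<notin> S\<close>]
      assms(3) \<open>y \<in> S'\<close> by (auto simp: bitstrings_def)
  moreover have "reachable N T S'"
  proof (rule Suc.hyps(1))
    have "T - S' = (S - S') - {x}"
      unfolding T_def using \<open>y \<in> S'\<close> by auto
    then show "n = card (T - S')"
      using Suc.hyps(2) \<open>x \<in> S\<close> \<open>x \<notin> S'\<close> \<open>finite S\<close> by simp
    have "card T = card S"
      unfolding T_def using card_Suc_Diff1[OF \<open>finite S\<close> \<open>x \<in> S\<close>] \<open>y \<notin> S\<close> \<open>finite S\<close> by simp
    then show "card T = card S'"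
      using Suc.prems(2) by simp
    show "T \<subseteq> bitstrings N"
      unfolding T_def using Suc.prems(1) assms(3) \<open>y \<in> S'\<close> by auto
  qed
  ultimately show ?case by (rule reachable_trans)
qed

theorem lemma3:
  fixes N m :: nat and S S' :: "bool list set"
  assumes "N \<ge> 3" and "1 \<le> m" and "m \<le> 2 ^ N - 2"
    and "S \<in> Sigma_m N m" and "S' \<in> Sigma_m N m"
  shows "\<exists>gs. set gs \<subseteq> gate_set N \<and> (apply_gates N gs) ` S = S'"
proof -
  have "reachable N S S'"
    using reachable_same_card[OF assms(1)] assms(4,5) unfolding Sigma_m_def by simp
  then show ?thesis
    unfolding reachable_def .
qed

end
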